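(* Let $n\ge 4$ and let $\mathcal{G}=\{G_1,\ldots,G_n\}$ be a family of graphs on the same vertex set of size $n$, where $G_i\cong K_1\vee(K_{n-2}\cup K_1)$ for every $i$. Then $\mathcal{G}$ admits a rainbow Hamiltonian cycle unless $G_1=G_2=\cdots=G_n$.
   Context: $K_1\vee(K_{n-2}\cup K_1)$ is $K_{n-1}$ plus one pendant vertex adjacent to one vertex of the $K_{n-1}$. $G_i=G_j$ means equal edge sets on the common vertex set. A rainbow Hamiltonian cycle in $\mathcal{G}$ is a Hamiltonian cycle on the common vertex set whose $n$ edges can be labeled $e_1,\ldots,e_n$ with $e_i\in E(G_i)$ for each $i$. *)

theory Defs
  imports Main
begin

definition simple_graph :: "'a set \<Rightarrow> 'a set set \<Rightarrow> bool" where
  "simple_graph V E \<longleftrightarrow> (\<forall>e\<in>E. \<exists>x y. x \<in> V \<and> y \<in> V \<and> x \<noteq> y \<and> e = {x, y})"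

definition graph_iso :: "'a set \<Rightarrow> 'a set set \<Rightarrow> 'b set \<Rightarrow> 'b set set \<Rightarrow> bool" where
  "graph_iso V E W F \<longleftrightarrow> (\<exists>f. bij_betw f V W \<and> (\<lambda>e. f ` e) ` E = F)"

text \<open>The graph K_1 join (K_{n-2} union K_1) on vertex set {0..<n}: a complete
  graph on {0..<n-1} plus the pendant vertex n-1 adjacent to vertex 0.\<close>
definition pendant_clique :: "nat \<Rightarrow> nat set set" where
  "pendant_clique n = {{i, j} | i j. i < n - 1 \<and> j < n - 1 \<and> i \<noteq> j} \<union> {{0, n - 1}}"

text \<open>A Hamiltonian cycle on V (with card V = n) is given by a list vs of the
  distinct vertices of V; its k-th edge (k < n) joins vs!k and vs!((k+1) mod n).\<close>
definition ham_cycle_list :: "'a set \<Rightarrow> 'a list \<Rightarrow> bool" where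
  "ham_cycle_list V vs \<longleftrightarrow> distinct vs \<and> set vs = V"

definition cycle_edge :: "'a list \<Rightarrow> nat \<Rightarrow> 'a set" where
  "cycle_edge vs k = {vs ! k, vs ! ((k + 1) mod length vs)}"

definition has_rainbow_ham_cycle :: "'a set \<Rightarrow> nat \<Rightarrow> (nat \<Rightarrow> 'a set set) \<Rightarrow> bool" where
  "has_rainbow_ham_cycle V n G \<longleftrightarrow>
     (\<exists>vs \<sigma>. ham_cycle_list V vs \<and> bij_betw \<sigma> {..<n} {1..n} \<and>
        (\<forall>k<n. cycle_edge vs k \<in> G (\<sigma> k)))"

end

theory Submission
  imports Defs
begin

(*
  Each G_i is the clique on V - {p_i} plus the single edge p_i c_i at its pendant vertex p_i, so a
  cycle edge avoiding p_i lies in G_i: it suffices to assign the graphs to the edges of a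
  Hamiltonian cycle so that every edge avoids the pendant vertex of its graph.

  If no vertex is the pendant vertex of more than n - 2 graphs, list the graphs grouped by pendant
  vertex, and the vertices so that each pendant vertex opens a block as long as its group, padded
  with vertices that are no graph's pendant vertex. After shifting the cycle by one position, the
  pendant vertex of the k-th graph lies at most n - 3 places behind the k-th edge, hence off it.

  Otherwise some u is the pendant vertex of all graphs but at most one, G_j. The cycle
  c_i, u, x, ... begins with the pendant edge of a graph G_i with p_i = u and an edge u x of G_j:
  a clique edge if p_j is not u, and otherwise the pendant edge of a G_j with c_j distinct from c_i,
  which exists as the graphs are not all equal. All later edges avoid u.
*)

definition pendant_graph :: "'a set \<Rightarrow> 'a \<Rightarrow> 'a \<Rightarrow> 'a set set" where
  "pendant_graph V p c =
     {{x, y} | x y. x \<in> V \<and> y \<in> V \<and> x \<noteq> y \<and> x \<noteq> p \<and> y \<noteq> p} \<union> {{p, c}}"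

lemma pendant_graph_clique_edge:
  "x \<in> V \<Longrightarrow> y \<in> V \<Longrightarrow> x \<noteq> y \<Longrightarrow> x \<noteq> p \<Longrightarrow> y \<noteq> p \<Longrightarrow> {x, y} \<in> pendant_graph V p c"
  unfolding pendant_graph_def by blast

lemma pendant_graph_pendant_edge: "{p, c} \<in> pendant_graph V p c"
  unfolding pendant_graph_def by blast

lemma pendant_graph_subset_Pow: "p \<in> V \<Longrightarrow> c \<in> V \<Longrightarrow> pendant_graph V p c \<subseteq> Pow V"
  unfolding pendant_graph_def by blast

lemma pendant_clique_eq_pendant_graph:
  "n \<ge> 2 \<Longrightarrow> pendant_clique n = pendant_graph {0..<n} (n - 1) 0"
  unfolding pendant_clique_def pendant_graph_def by fastforce

lemma image_doubletons: "image f ` {{x, y} | x y. P x y} = {{f x, f y} | x y. P x y}"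
  by (auto simp: image_iff) (metis image_empty image_insert)

lemma image_pendant_graph:
  assumes "inj_on f V" "p \<in> V"
  shows "image f ` pendant_graph V p c = pendant_graph (f ` V) (f p) (f c)"
proof -
  have inj: "\<And>x y. x \<in> V \<Longrightarrow> y \<in> V \<Longrightarrow> f x = f y \<longleftrightarrow> x = y"
    using assms(1) by (auto simp: inj_on_eq_iff)
  have "{{f x, f y} | x y. x \<in> V \<and> y \<in> V \<and> x \<noteq> y \<and> x \<noteq> p \<and> y \<noteq> p} =
      {{x, y} | x y. x \<in> f ` V \<and> y \<in> f ` V \<and> x \<noteq> y \<and> x \<noteq> f p \<and> y \<noteq> f p}"
  proof (intro equalityI subsetI)
    fix e assume "e \<in> {{f x, f y} | x y. x \<in> V \<and> y \<in> V \<and> x \<noteq> y \<and> x \<noteq> p \<and> y \<noteq> p}"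
    then show "e \<in> {{x, y} | x y. x \<in> f ` V \<and> y \<in> f ` V \<and> x \<noteq> y \<and> x \<noteq> f p \<and> y \<noteq> f p}"
      using inj assms(2) by blast
  next
    fix e assume "e \<in> {{x, y} | x y. x \<in> f ` V \<and> y \<in> f ` V \<and> x \<noteq> y \<and> x \<noteq> f p \<and> y \<noteq> f p}"
    then show "e \<in> {{f x, f y} | x y. x \<in> V \<and> y \<in> V \<and> x \<noteq> y \<and> x \<noteq> p \<and> y \<noteq> p}"
      by blast
  qed
  then show ?thesis unfolding pendant_graph_def image_Un image_doubletons by simp
qed

lemma simple_graph_subset_Pow: "simple_graph V E \<Longrightarrow> E \<subseteq> Pow V"
  unfolding simple_graph_def by fastforce

lemma pendant_graph_if_iso_pendant_clique:
  assumes "n \<ge> 2" "simple_graph V E" "graph_iso V E {0..<n} (pendant_clique n)"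
  obtains p c where "p \<in> V" "c \<in> V" "p \<noteq> c" "E = pendant_graph V p c"
proof -
  obtain f where f: "bij_betw f V {0..<n}" and fE: "image f ` E = pendant_clique n"
    using assms(3) unfolding graph_iso_def by blast
  define p where "p = inv_into V f (n - 1)"
  define c where "c = inv_into V f 0"
  have p: "p \<in> V" "f p = n - 1" and c: "c \<in> V" "f c = 0"
    using assms(1) f unfolding p_def c_def
    by (auto simp: bij_betw_def intro: inv_into_into f_inv_into_f)
  have "image f ` E = image f ` pendant_graph V p c"
    using f fE p c assms(1)
    by (simp add: image_pendant_graph bij_betw_def pendant_clique_eq_pendant_graph)
  then have "E = pendant_graph V p c"
    using inj_on_image_Pow[OF bij_betw_imp_inj_on[OF f]] simple_graph_subset_Pow[OF assms(2)]
      pendant_graph_subset_Pow[OF p(1) c(1)]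
    by (simp add: inj_on_image_eq_iff)
  moreover have "p \<noteq> c" using p c assms(1) by auto
  ultimately show thesis using that p c by blast
qed

lemma pendant_graph_family_if_iso:
  assumes "n \<ge> 2" "\<And>i. i \<in> I \<Longrightarrow> simple_graph V (G i)"
    and "\<And>i. i \<in> I \<Longrightarrow> graph_iso V (G i) {0..<n} (pendant_clique n)"
  obtains p c where "\<forall>i\<in>I. p i \<in> V \<and> c i \<in> V \<and> p i \<noteq> c i"
    and "\<forall>i\<in>I. G i = pendant_graph V (p i) (c i)"
proof -
  have "\<forall>i\<in>I. \<exists>p c. p \<in> V \<and> c \<in> V \<and> p \<noteq> c \<and> G i = pendant_graph V p c"
  proof
    fix i assume "i \<in> I"
    show "\<exists>p c. p \<in> V \<and> c \<in> V \<and> p \<noteq> c \<and> G i = pendant_graph V p c"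
      by (rule pendant_graph_if_iso_pendant_clique[OF assms(1) assms(2,3)[OF \<open>i \<in> I\<close>]]) auto
  qed
  from bchoice[OF this] obtain p
    where "\<forall>i\<in>I. \<exists>c. p i \<in> V \<and> c \<in> V \<and> p i \<noteq> c \<and> G i = pendant_graph V (p i) c"
    by blast
  from bchoice[OF this] obtain c
    where "\<forall>i\<in>I. p i \<in> V \<and> c i \<in> V \<and> p i \<noteq> c i \<and> G i = pendant_graph V (p i) (c i)"
    by blast
  then show thesis using that[of p c] by blast
qed

lemma extend_distinct_list:
  assumes "finite A" "distinct xs" "set xs \<subseteq> A"
  obtains ys where "distinct (xs @ ys)" "set (xs @ ys) = A"
proof -
  obtain ys where "set ys = A - set xs" "distinct ys"
    using finite_distinct_list[of "A - set xs"] assms(1) by blast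
  then show thesis using that assms(2,3) by auto
qed

lemma has_rainbow_ham_cycleI:
  assumes "ham_cycle_list V vs" "distinct gs" "set gs = {1..n}"
    and "\<forall>k<n. cycle_edge vs k \<in> G (gs ! k)"
  shows "has_rainbow_ham_cycle V n G"
proof -
  have "length gs = n" using assms(2,3) distinct_card by fastforce
  then have "bij_betw ((!) gs) {..<n} {1..n}" using assms(2,3) by (intro bij_betw_nth) auto
  then show ?thesis using assms(1,4) unfolding has_rainbow_ham_cycle_def by blast
qed

lemma has_rainbow_ham_cycle_mono:
  assumes "has_rainbow_ham_cycle V n H" "\<forall>i\<in>{1..n}. H i \<subseteq> G i"
  shows "has_rainbow_ham_cycle V n G"
proof -
  obtain vs \<sigma> where "ham_cycle_list V vs" "bij_betw \<sigma> {..<n} {1..n}"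
    "\<forall>k<n. cycle_edge vs k \<in> H (\<sigma> k)"
    using assms(1) unfolding has_rainbow_ham_cycle_def by blast
  moreover have "\<forall>k<n. \<sigma> k \<in> {1..n}" using \<open>bij_betw \<sigma> {..<n} {1..n}\<close> bij_betwE by blast
  ultimately show ?thesis using assms(2) unfolding has_rainbow_ham_cycle_def by blast
qed

lemma cycle_edge_in_pendant_graph:
  assumes "ham_cycle_list V vs" "length vs \<ge> 2" "k < length vs" "v \<notin> cycle_edge vs k"
  shows "cycle_edge vs k \<in> pendant_graph V v c"
proof -
  let ?k' = "(k + 1) mod length vs"
  have "?k' \<noteq> k" "?k' < length vs"
    using assms(2,3) by (auto simp: mod_Suc_eq [symmetric] mod_if)
  moreover have "distinct vs" "set vs = V" using assms(1) unfolding ham_cycle_list_def by auto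
  ultimately have "vs ! k \<noteq> vs ! ?k'" "vs ! k \<in> V" "vs ! ?k' \<in> V"
    using assms(3) nth_eq_iff_index_eq[of vs k ?k'] by auto
  moreover have "vs ! k \<noteq> v" "vs ! ?k' \<noteq> v" using assms(4) unfolding cycle_edge_def by auto
  ultimately show ?thesis unfolding cycle_edge_def by (intro pendant_graph_clique_edge)
qed

lemma nth_notin_cycle_edge:
  assumes "distinct vs" "r < length vs" "k < length vs" "r \<noteq> k" "r \<noteq> (k + 1) mod length vs"
  shows "vs ! r \<notin> cycle_edge vs k"
proof -
  have "(k + 1) mod length vs < length vs" by (rule mod_less_divisor) (use assms(3) in linarith)
  then show ?thesis
    using assms nth_eq_iff_index_eq[of vs r k] nth_eq_iff_index_eq[of vs r "(k + 1) mod length vs"]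
    unfolding cycle_edge_def by auto
qed

definition fibre_lagged :: "('b \<Rightarrow> 'a) \<Rightarrow> 'b list \<Rightarrow> 'a list \<Rightarrow> bool" where
  "fibre_lagged p gs vs \<longleftrightarrow>
     (\<forall>t<length gs. \<exists>r\<le>t. r < length vs \<and> vs ! r = p (gs ! t) \<and>
        t - r < card {i \<in> set gs. p i = p (gs ! t)})"

lemma fibre_lagged_Nil: "fibre_lagged p [] vs"
  unfolding fibre_lagged_def by simp

lemma fibre_lagged_append:
  assumes lag: "fibre_lagged p gs vs" and "distinct xs" "\<forall>i\<in>set xs. p i = u"
    and len: "length xs = Suc (length zs)"
  shows "fibre_lagged p (xs @ gs) ((u # zs) @ vs)"
  unfolding fibre_lagged_def
proof (intro allI impI)
  fix t assume t: "t < length (xs @ gs)"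
  let ?fibre = "\<lambda>ks. card {i \<in> set ks. p i = p ((xs @ gs) ! t)}"
  show "\<exists>r\<le>t. r < length ((u # zs) @ vs) \<and> ((u # zs) @ vs) ! r = p ((xs @ gs) ! t) \<and>
      t - r < ?fibre (xs @ gs)"
  proof (cases "t < length xs")
    case True
    then have u: "p ((xs @ gs) ! t) = u" using assms(3) by (simp add: nth_append)
    have "t < card (set xs)" using True \<open>distinct xs\<close> by (simp add: distinct_card)
    also have "\<dots> \<le> ?fibre (xs @ gs)" using assms(3) u by (intro card_mono) auto
    finally show ?thesis using u by (intro exI[of _ 0]) auto
  next
    case False
    define t' where "t' = t - length xs"
    have g: "(xs @ gs) ! t = gs ! t'" using False by (simp add: nth_append t'_def)
    have "t' < length gs" using t False by (simp add: t'_def)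
    then obtain r where r: "r \<le> t'" "r < length vs" "vs ! r = p (gs ! t')"
      "t' - r < ?fibre gs"
      using lag g unfolding fibre_lagged_def by auto
    have "?fibre gs \<le> ?fibre (xs @ gs)" by (intro card_mono) auto
    moreover have "((u # zs) @ vs) ! (r + length xs) = vs ! r"
      using len by (simp add: nth_append)
    ultimately show ?thesis
      using r False len g by (intro exI[of _ "r + length xs"]) (auto simp: t'_def)
  qed
qed

lemma fibre_le_card_unused:
  assumes "finite I" "p ` I \<subseteq> W" "card I = card W" "finite W" "i \<in> I"
  shows "card {j \<in> I. p j = p i} - 1 \<le> card (W - p ` I)"
proof -
  let ?F = "{j \<in> I. p j = p i}"
  have "p ` I = insert (p i) (p ` (I - ?F))" using assms(5) by blast
  then have "card (p ` I) \<le> Suc (card (p ` (I - ?F)))"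
    using assms(1) by (simp add: card_insert_if)
  also have "\<dots> \<le> Suc (card (I - ?F))" using assms(1) by (simp add: card_image_le)
  finally have "card (p ` I) \<le> Suc (card (I - ?F))" .
  moreover have "card (I - ?F) = card I - card ?F" using assms(1) by (intro card_Diff_subset) auto
  moreover have "card ?F \<le> card I" using assms(1) by (intro card_mono) auto
  moreover have "card (W - p ` I) = card W - card (p ` I)"
    using assms(1,2) by (intro card_Diff_subset) auto
  ultimately show ?thesis using assms(3) by linarith
qed

lemma fibre_lagged_exists:
  assumes "finite I" "finite W" "card I = card W" "p ` I \<subseteq> W"
  obtains gs vs where "distinct gs" "set gs = I" "distinct vs" "set vs = W" "fibre_lagged p gs vs"
  using assms
proof (induction "card I" arbitrary: I W thesis rule: less_induct)
  case less
  show ?case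
  proof (cases "I = {}")
    case True
    then show ?thesis using less.prems fibre_lagged_Nil[of p "[]"] by (intro less.prems(1)) auto
  next
    case False
    then obtain i where i: "i \<in> I" by blast
    define F where "F = {j \<in> I. p j = p i}"
    have F: "finite F" "F \<subseteq> I" "i \<in> F" using less.prems(2) i by (auto simp: F_def)
    obtain Z where Z: "Z \<subseteq> W - p ` I" "card Z = card F - 1"
      using fibre_le_card_unused[OF less.prems(2,5,4,3) i] obtain_subset_with_card_n
      unfolding F_def by metis
    have Z_fin: "finite Z" using Z(1) less.prems(3) finite_subset by blast
    have pi: "p i \<in> W" "p i \<notin> Z" using Z(1) less.prems(5) i by auto
    define I' where "I' = I - F"
    define W' where "W' = W - insert (p i) Z"
    have "card F \<ge> 1" using F by (auto simp: Suc_le_eq card_gt_0_iff)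
    then have "card (insert (p i) Z) = card F" using Z Z_fin pi(2) by simp
    moreover have "insert (p i) Z \<subseteq> W" using Z(1) pi(1) by blast
    ultimately have "card W' = card W - card F"
      unfolding W'_def using Z_fin by (simp add: card_Diff_subset)
    moreover have "card I' = card I - card F"
      unfolding I'_def using F by (simp add: card_Diff_subset)
    ultimately have card_eq: "card I' = card W'" using less.prems(4) by simp
    have smaller: "card I' < card I"
      unfolding I'_def using F less.prems(2) by (intro psubset_card_mono) auto
    have "p ` I' \<subseteq> W'"
      using Z(1) less.prems(5) unfolding I'_def W'_def F_def by auto
    moreover have "finite I'" "finite W'" using less.prems(2,3) by (auto simp: I'_def W'_def)
    ultimately obtain gs vs where IH: "distinct gs" "set gs = I'" "distinct vs" "set vs = W'"
      "fibre_lagged p gs vs"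
      using less.hyps[OF smaller] card_eq by blast
    obtain xs where xs: "set xs = F" "distinct xs" using finite_distinct_list F(1) by blast
    obtain zs where zs: "set zs = Z" "distinct zs" using finite_distinct_list Z_fin by blast
    have "length xs = Suc (length zs)"
      using distinct_card[OF xs(2)] distinct_card[OF zs(2)] xs(1) zs(1) Z(2) \<open>card F \<ge> 1\<close>
      by simp
    then have "fibre_lagged p (xs @ gs) ((p i # zs) @ vs)"
      using IH(5) xs unfolding F_def by (intro fibre_lagged_append) auto
    moreover have "distinct (xs @ gs)" "set (xs @ gs) = I"
      using xs IH F(2) unfolding I'_def by auto
    moreover have "distinct ((p i # zs) @ vs)" "set ((p i # zs) @ vs) = W"
      using zs IH pi Z(1) unfolding W'_def by auto
    ultimately show ?thesis using less.prems(1) by blast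
  qed
qed

lemma cycle_edge_rotate1:
  assumes "k < length vs"
  shows "cycle_edge (rotate1 vs) k =
    {vs ! ((k + 1) mod length vs), vs ! ((k + 2) mod length vs)}"
proof -
  have "(k + 1) mod length vs < length vs" by (rule mod_less_divisor) (use assms in linarith)
  then show ?thesis
    using assms by (simp add: cycle_edge_def nth_rotate1 mod_Suc_eq)
qed

lemma successors_mod_ne:
  fixes r k n :: nat
  assumes "r \<le> k" "k < n" "k + 3 \<le> r + n"
  shows "(k + 1) mod n \<noteq> r" "(k + 2) mod n \<noteq> r"
  using assms by (auto simp: mod_if)

lemma rainbow_ham_cycle_if_small_fibres:
  fixes p c :: "nat \<Rightarrow> 'a"
  assumes "finite V" "card V = n" "n \<ge> 3" "p ` {1..n} \<subseteq> V"
    and small: "\<forall>u. card {i \<in> {1..n}. p i = u} \<le> n - 2"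
  shows "has_rainbow_ham_cycle V n (\<lambda>i. pendant_graph V (p i) (c i))"
proof -
  obtain gs vs where gs: "distinct gs" "set gs = {1..n}"
    and vs: "distinct vs" "set vs = V" and lag: "fibre_lagged p gs vs"
    using fibre_lagged_exists[of "{1..n}" V p] assms(1,2,4) by auto
  have len: "length gs = n" "length vs = n"
    using gs vs assms(2) distinct_card by fastforce+
  have "ham_cycle_list V (rotate1 vs)" using vs by (simp add: ham_cycle_list_def)
  moreover have "cycle_edge (rotate1 vs) k \<in> pendant_graph V (p (gs ! k)) (c (gs ! k))"
    if k: "k < n" for k
  proof -
    obtain r where r: "r \<le> k" "r < n" "vs ! r = p (gs ! k)"
      "k - r < card {i \<in> {1..n}. p i = p (gs ! k)}"
      using lag k len gs(2) unfolding fibre_lagged_def by auto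
    then have "k + 3 \<le> r + n" using small[rule_format, of "p (gs ! k)"] by linarith
    then have "vs ! r \<notin> cycle_edge (rotate1 vs) k"
      using successors_mod_ne[OF r(1) k] k r(2) vs(1) len
      by (simp add: cycle_edge_rotate1 nth_eq_iff_index_eq)
    then show ?thesis
      using cycle_edge_in_pendant_graph[of V "rotate1 vs" k "vs ! r"]
        \<open>ham_cycle_list V (rotate1 vs)\<close> assms(3) k len r(3)
      by simp
  qed
  ultimately show ?thesis using gs by (intro has_rainbow_ham_cycleI) auto
qed

lemma rainbow_ham_cycle_if_dominant_pendant:
  fixes p c :: "nat \<Rightarrow> 'a"
  assumes "finite V" "card V = n" "n \<ge> 3"
    and ij: "i \<in> {1..n}" "j \<in> {1..n}" "i \<noteq> j"
    and dominant: "\<forall>k\<in>{1..n} - {j}. p k = u"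
    and "u \<in> V" "c i \<in> V" "c i \<noteq> u"
    and x: "x \<in> V" "x \<noteq> u" "x \<noteq> c i" "{u, x} \<in> pendant_graph V (p j) (c j)"
  shows "has_rainbow_ham_cycle V n (\<lambda>k. pendant_graph V (p k) (c k))"
proof -
  obtain rs where rs: "distinct ([c i, u, x] @ rs)" "set ([c i, u, x] @ rs) = V"
    using extend_distinct_list[of V "[c i, u, x]"] assms(1,8-10) x(1-3) by auto
  obtain qs where qs: "distinct ([i, j] @ qs)" "set ([i, j] @ qs) = {1..n}"
    using extend_distinct_list[of "{1..n}" "[i, j]"] ij by auto
  define vs where "vs = [c i, u, x] @ rs"
  define gs where "gs = [i, j] @ qs"
  have ham: "ham_cycle_list V vs" using rs by (simp add: ham_cycle_list_def vs_def)
  have len: "length vs = n" "length gs = n"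
    using distinct_card[OF rs(1)] distinct_card[OF qs(1)] rs(2) qs(2) assms(2)
    unfolding vs_def gs_def by simp_all
  have "cycle_edge vs k \<in> pendant_graph V (p (gs ! k)) (c (gs ! k))" if k: "k < n" for k
  proof -
    consider "k = 0" | "k = 1" | "k \<ge> 2" by linarith
    then show ?thesis
    proof cases
      case 1
      then have "cycle_edge vs k = {p i, c i}"
        using dominant ij len by (auto simp: cycle_edge_def vs_def)
      then show ?thesis using 1 pendant_graph_pendant_edge by (simp add: gs_def)
    next
      case 2
      then have "cycle_edge vs k = {u, x}" using len assms(3) by (simp add: cycle_edge_def vs_def)
      then show ?thesis using 2 x(4) by (simp add: gs_def)
    next
      case 3
      have "gs ! k \<noteq> gs ! 1" using 3 k len qs(1) nth_eq_iff_index_eq[of gs k 1]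
        unfolding gs_def by simp
      moreover have "gs ! k \<in> {1..n}" using k len qs(2) nth_mem[of k gs] unfolding gs_def by simp
      ultimately have "p (gs ! k) = u" using dominant by (simp add: gs_def)
      moreover have "(k + 1) mod n \<noteq> 1" using 3 k by (simp add: mod_if)
      then have "vs ! 1 \<notin> cycle_edge vs k"
        using 3 k len rs(1) assms(3) by (intro nth_notin_cycle_edge) (simp_all add: vs_def)
      ultimately show ?thesis
        using cycle_edge_in_pendant_graph[OF ham] 3 k len assms(3) by (simp add: vs_def)
    qed
  qed
  moreover have "distinct gs" "set gs = {1..n}" using qs unfolding gs_def by simp_all
  ultimately show ?thesis using ham by (intro has_rainbow_ham_cycleI) auto
qed

lemma rainbow_ham_cycle_if_large_fibre:
  fixes p c :: "nat \<Rightarrow> 'a"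
  assumes "finite V" "card V = n" "n \<ge> 4"
    and pc: "\<forall>i\<in>{1..n}. p i \<in> V \<and> c i \<in> V \<and> p i \<noteq> c i"
    and not_const: "\<exists>i\<in>{1..n}. \<exists>j\<in>{1..n}. (p i, c i) \<noteq> (p j, c j)"
    and large: "card {i \<in> {1..n}. p i = u} \<ge> n - 1"
  shows "has_rainbow_ham_cycle V n (\<lambda>i. pendant_graph V (p i) (c i))"
proof (cases "\<exists>j\<in>{1..n}. p j \<noteq> u")
  case True
  then obtain j where j: "j \<in> {1..n}" "p j \<noteq> u" by blast
  have "{i \<in> {1..n}. p i = u} \<subseteq> {1..n} - {j}" using j by blast
  moreover have card_rest: "card ({1..n} - {j}) = n - 1" using j by simp
  ultimately have fibre: "{i \<in> {1..n}. p i = u} = {1..n} - {j}"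
    using large card_mono[of "{1..n} - {j}" "{i \<in> {1..n}. p i = u}"]
    by (intro card_subset_eq) auto
  have "{1..n} - {j} \<noteq> {}"
  proof
    assume "{1..n} - {j} = {}"
    then have "n - 1 = 0" using card_rest by (metis card.empty)
    then show False using assms(3) by simp
  qed
  then obtain i where i: "i \<in> {1..n}" "i \<noteq> j" "p i = u" using fibre by blast
  have "card {u, c i, p j} < card V" using assms(2,3) by (simp add: card_insert_if)
  then have "\<not> V \<subseteq> {u, c i, p j}" using card_mono[of "{u, c i, p j}" V] by auto
  then obtain x where x: "x \<in> V" "x \<notin> {u, c i, p j}" by blast
  have u: "u \<in> V" "c i \<in> V" "c i \<noteq> u" using pc i(1) i(3) by blast+
  have "{u, x} \<in> pendant_graph V (p j) (c j)"
    using x j u by (intro pendant_graph_clique_edge) auto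
  moreover have "\<forall>k\<in>{1..n} - {j}. p k = u" using fibre by blast
  ultimately show ?thesis
    using assms(1-3) i(1,2) j(1) x u by (intro rainbow_ham_cycle_if_dominant_pendant) auto
next
  case False
  then obtain i j where ij: "i \<in> {1..n}" "j \<in> {1..n}" "c i \<noteq> c j" "p i = u" "p j = u"
    using not_const by auto
  then show ?thesis
    using assms(1-3) False pc pendant_graph_pendant_edge[of "p j" "c j" V]
    by (intro rainbow_ham_cycle_if_dominant_pendant[where i = i and j = j and u = u and x = "c j"]) auto
qed

lemma rainbow_ham_cycle_pendant_family:
  fixes p c :: "nat \<Rightarrow> 'a"
  assumes "finite V" "card V = n" "n \<ge> 4"
    and pc: "\<forall>i\<in>{1..n}. p i \<in> V \<and> c i \<in> V \<and> p i \<noteq> c i"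
    and "\<exists>i\<in>{1..n}. \<exists>j\<in>{1..n}. (p i, c i) \<noteq> (p j, c j)"
  shows "has_rainbow_ham_cycle V n (\<lambda>i. pendant_graph V (p i) (c i))"
proof (cases "\<forall>u. card {i \<in> {1..n}. p i = u} \<le> n - 2")
  case True
  then show ?thesis
    using assms(1-3) pc by (intro rainbow_ham_cycle_if_small_fibres) auto
next
  case False
  then obtain u where "\<not> card {i \<in> {1..n}. p i = u} \<le> n - 2" by blast
  then have "card {i \<in> {1..n}. p i = u} \<ge> n - 1" by linarith
  then show ?thesis using assms by (intro rainbow_ham_cycle_if_large_fibre)
qed

theorem mainTheorem4:
  fixes V :: "'a set" and n :: nat and G :: "nat \<Rightarrow> 'a set set"
  assumes "n \<ge> 4"
    and "finite V" and "card V = n"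
    and "\<And>i. i \<in> {1..n} \<Longrightarrow> simple_graph V (G i)"
    and "\<And>i. i \<in> {1..n} \<Longrightarrow> graph_iso V (G i) {0..<n} (pendant_clique n)"
    and "\<not> (\<forall>i\<in>{1..n}. \<forall>j\<in>{1..n}. G i = G j)"
  shows "has_rainbow_ham_cycle V n G"
proof -
  obtain p c where pc: "\<forall>i\<in>{1..n}. p i \<in> V \<and> c i \<in> V \<and> p i \<noteq> c i"
    and G: "\<forall>i\<in>{1..n}. G i = pendant_graph V (p i) (c i)"
    using pendant_graph_family_if_iso[of n "{1..n}" V G] assms(1,4,5) by auto
  obtain i j where ij: "i \<in> {1..n}" "j \<in> {1..n}" "G i \<noteq> G j" using assms(6) by blast
  then have "(p i, c i) \<noteq> (p j, c j)" using G[rule_format, OF ij(1)] G[rule_format, OF ij(2)] by auto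
  then have "\<exists>i\<in>{1..n}. \<exists>j\<in>{1..n}. (p i, c i) \<noteq> (p j, c j)" using ij by blast
  then have "has_rainbow_ham_cycle V n (\<lambda>i. pendant_graph V (p i) (c i))"
    using assms(1-3) pc by (intro rainbow_ham_cycle_pendant_family)
  then show ?thesis
    by (rule has_rainbow_ham_cycle_mono) (use G in blast)
qed

end
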